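(* For a prime $p$ and integer $d \ge 1$, let $t = \lfloor 2d/(p-1) \rfloor$ and \[ B'(p,d) = 2 + \left\lfloor \frac{pt + (p-1)\lambda_p(t)}{d} \right\rfloor, \] where for $m = \sum_{i=0}^s c_i p^i$ with $0 \le c_i < p$ one sets $\lambda_p(m) = \sum_{i=0}^s i c_i p^i$. Then: \begin{enumerate} \item If $p \ge 5$ and $p \ge d$, then $B'(p,d) = 2$ if $p > 2d+1$; $B'(p,d) = 4$ if $p = 2d+1$ or $p = d$; and $B'(p,d) = 3$ if $d+1 < p < 2d+1$. \item If $5 \le p \le d$, then $B'(p,d) \ge 3$. \item $B'(3,1) = B'(3,2) = 5$, and $B'(3,d) \ge 6$ for $d \ge 3$. \item $B'(2,1) = 8$, $B'(2,2) = 10$, $B'(2,3) = 9$, and $B'(2,d) \ge 9$ for $d \ge 4$. \item For any prime $p$, if $(p-1) \mid 2d$, then $B'(p,d) \ge 4 + 2 v_p(d) + 4 v_2(p) + v_p(3)$, with equality when $\frac{2d}{p^{v_p(2d)}(p-1)} < p$. \end{enumerate}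
   Context: $v_p$ denotes the $p$-adic valuation (so $v_2(p) = 1$ if $p = 2$ and $0$ otherwise, and $v_p(3) = 1$ if $p=3$ and $0$ otherwise). Note $B'(p,d) = \lfloor B(p,d)/d \rfloor$ where $B(p,d) = 2d + pt + (p-1)\lambda_p(t)$ is the Brumer–Kramer conductor bound. *)

theory Defs
  imports "HOL-Computational_Algebra.Computational_Algebra"
begin

text \<open>For p >= 2 all digits with index i > m
  vanish (p^i > m), so summing over i in {..m} covers all digits.\<close>
definition lambda_p :: "nat \<Rightarrow> nat \<Rightarrow> nat" where
  "lambda_p p m = (\<Sum>i\<le>m. i * ((m div p ^ i) mod p) * p ^ i)"

definition t_pd :: "nat \<Rightarrow> nat \<Rightarrow> nat" where
  "t_pd p d = (2 * d) div (p - 1)"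

definition B' :: "nat \<Rightarrow> nat \<Rightarrow> nat" where
  "B' p d = 2 + (p * t_pd p d + (p - 1) * lambda_p p (t_pd p d)) div d"

end

theory Submission
  imports Defs
begin

text \<open>Dropping the last base-p digit gives the recursion
  lambda_p(m) = p (lambda_p(m div p) + m div p), hence lambda_p(p^k u) = p^k (k u + lambda_p(u)),
  and lambda_p vanishes below p. If (p - 1) divides 2d, write t = 2d/(p - 1) = p^j u with
  j = v_p(2d). The numerator of B'(p,d) is then 2(1 + j) d + t + (p - 1) p^j lambda_p(u), so
  B'(p,d) = 4 + 2j + floor((t + (p - 1) p^j lambda_p(u)) / d), which is at least
  4 + 2j + floor(2/(p - 1)), with equality as soon as u < p. In the remaining cases t \<le> 2,
  or lambda_p(m) \<ge> m/2 for m \<ge> p already forces the bound.\<close>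

lemma sum_digits_eq_mod_power:
  fixes n p :: nat
  shows "(\<Sum>j<N. (n div p ^ j mod p) * p ^ j) = n mod p ^ N"
proof (induction N)
  case 0
  then show ?case by simp
next
  case (Suc N)
  have "n mod p ^ Suc N = p ^ N * (n div p ^ N mod p) + n mod p ^ N"
    using mod_mult2_eq[of n "p ^ N" p] by (simp add: mult.commute)
  with Suc show ?case by simp
qed

lemma lambda_p_eq_sum_lessThan:
  assumes "2 \<le> p" "m < N"
  shows "lambda_p p m = (\<Sum>i<N. i * (m div p ^ i mod p) * p ^ i)"
proof -
  have split: "{..<N} = {..m} \<union> {m<..<N}"
    using assms(2) by auto
  have "i * (m div p ^ i mod p) * p ^ i = 0" if "m < i" for i
  proof -
    have "m < p ^ i"
      using that power_gt_expt[of p i] assms(1) by simp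
    then show ?thesis by simp
  qed
  then have "(\<Sum>i\<in>{m<..<N}. i * (m div p ^ i mod p) * p ^ i) = 0"
    by (intro sum.neutral) auto
  then show ?thesis
    unfolding lambda_p_def split by (subst sum.union_disjoint) auto
qed

lemma lambda_p_rec:
  assumes "2 \<le> p"
  shows "lambda_p p m = p * (lambda_p p (m div p) + m div p)"
proof (cases "m = 0")
  case True
  then show ?thesis by (simp add: lambda_p_def)
next
  case False
  define q where "q = m div p"
  have "q < m"
    using False assms by (simp add: q_def)
  have "lambda_p p m = (\<Sum>i<Suc m. i * (m div p ^ i mod p) * p ^ i)"
    by (rule lambda_p_eq_sum_lessThan[OF assms]) simp
  also have "\<dots> = (\<Sum>j<m. Suc j * (q div p ^ j mod p) * p ^ Suc j)"
    by (subst sum.lessThan_Suc_shift) (simp add: q_def div_mult2_eq)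
  also have "\<dots> = p * ((\<Sum>j<m. j * (q div p ^ j mod p) * p ^ j) + (\<Sum>j<m. (q div p ^ j mod p) * p ^ j))"
    by (simp add: sum_distrib_left sum.distrib[symmetric] algebra_simps)
  also have "(\<Sum>j<m. j * (q div p ^ j mod p) * p ^ j) = lambda_p p q"
    using lambda_p_eq_sum_lessThan[OF assms \<open>q < m\<close>] by simp
  also have "(\<Sum>j<m. (q div p ^ j mod p) * p ^ j) = q"
    using \<open>q < m\<close> power_gt_expt[of p m] assms by (simp add: sum_digits_eq_mod_power)
  finally show ?thesis
    by (simp add: q_def)
qed

lemma lambda_p_less: "2 \<le> p \<Longrightarrow> m < p \<Longrightarrow> lambda_p p m = 0"
  by (subst lambda_p_rec) (auto simp: lambda_p_def)

lemma le_double_lambda_p: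
  assumes "2 \<le> p" "p \<le> m"
  shows "m \<le> 2 * lambda_p p m"
proof -
  have "1 \<le> m div p"
    using assms by (simp add: Suc_le_eq div_greater_zero_iff)
  then have "p \<le> p * (m div p)"
    by simp
  then have "m < 2 * (p * (m div p))"
    using mod_less_divisor[of p m] mult_div_mod_eq[of p m] assms(1) by linarith
  also have "p * (m div p) \<le> lambda_p p m"
    by (subst lambda_p_rec[OF assms(1)]) simp
  finally show ?thesis by simp
qed

lemma lambda_p_power_mult:
  assumes "2 \<le> p"
  shows "lambda_p p (p ^ k * u) = p ^ k * (k * u + lambda_p p u)"
proof (induction k)
  case 0
  then show ?case by simp
next
  case (Suc k)
  have "p ^ Suc k * u div p = p ^ k * u"
    using assms by simp
  then have "lambda_p p (p ^ Suc k * u) = p * (lambda_p p (p ^ k * u) + p ^ k * u)"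
    using lambda_p_rec[OF assms, of "p ^ Suc k * u"] by simp
  with Suc.IH show ?case by (simp add: algebra_simps)
qed

lemma B'_eq_if_t_pd_less:
  assumes "2 \<le> p" "t_pd p d < p"
  shows "B' p d = 2 + p * t_pd p d div d"
  using lambda_p_less[OF assms] by (simp add: B'_def)

lemma B'_eq_2: "2 * d + 1 < p \<Longrightarrow> B' p d = 2"
  by (simp add: B'_def t_pd_def lambda_p_def)

lemma B'_Suc_double_eq_4:
  assumes "2 \<le> d"
  shows "B' (2 * d + 1) d = 4"
proof -
  have "t_pd (2 * d + 1) d = 1"
    using assms by (simp add: t_pd_def)
  moreover have "(2 * d + 1) div d = 2"
    using assms by (intro div_nat_eqI) auto
  ultimately show ?thesis
    using assms by (simp add: B'_eq_if_t_pd_less)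
qed

lemma B'_diag_eq_4:
  assumes "4 \<le> p"
  shows "B' p p = 4"
proof -
  have "t_pd p p = 2"
    unfolding t_pd_def using assms by (intro div_nat_eqI) auto
  then show ?thesis
    using assms by (simp add: B'_eq_if_t_pd_less)
qed

lemma B'_eq_3:
  assumes "odd p" "d + 1 < p" "p < 2 * d + 1"
  shows "B' p d = 3"
proof -
  have "p \<noteq> 2 * d"
    using assms(1) by auto
  then have "p < 2 * d"
    using assms(3) by simp
  then have "t_pd p d = 1" "p div d = 1"
    using assms(2) by (auto simp: t_pd_def intro: div_nat_eqI)
  then show ?thesis
    using assms by (simp add: B'_eq_if_t_pd_less)
qed

lemma B'_ge_3:
  assumes "2 \<le> p" "p \<le> d"
  shows "3 \<le> B' p d"
proof -
  define t where "t = t_pd p d"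
  have "2 * d = (p - 1) * t + 2 * d mod (p - 1)"
    unfolding t_def t_pd_def by simp
  moreover have "2 * d mod (p - 1) < p - 1"
    using assms by simp
  ultimately have "d \<le> (p - 1) * t"
    using assms by linarith
  also have "\<dots> \<le> p * t + (p - 1) * lambda_p p t"
    by (simp add: trans_le_add1)
  finally have "1 \<le> (p * t + (p - 1) * lambda_p p t) div d"
    using assms by (simp add: Suc_le_eq div_greater_zero_iff)
  then show ?thesis
    unfolding B'_def t_def by simp
qed

lemma B'_3_ge_6:
  assumes "3 \<le> d"
  shows "6 \<le> B' 3 d"
proof -
  have "4 * d \<le> 3 * d + 2 * lambda_p 3 d"
    using le_double_lambda_p[of 3 d] assms by simp
  then have "4 \<le> (3 * d + 2 * lambda_p 3 d) div d"
    using assms by (simp add: less_eq_div_iff_mult_less_eq mult.commute)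
  then show ?thesis
    by (simp add: B'_def t_pd_def)
qed

lemma B'_2_ge_9:
  assumes "2 \<le> d"
  shows "9 \<le> B' 2 d"
proof -
  have "lambda_p 2 (2 * d) = 2 * (lambda_p 2 d + d)"
    using lambda_p_rec[of 2 "2 * d"] by simp
  moreover have "d \<le> 2 * lambda_p 2 d"
    using le_double_lambda_p[of 2 d] assms by simp
  ultimately have "7 * d \<le> 2 * (2 * d) + lambda_p 2 (2 * d)"
    by simp
  then have "7 \<le> (2 * (2 * d) + lambda_p 2 (2 * d)) div d"
    using assms by (simp add: less_eq_div_iff_mult_less_eq mult.commute)
  then show ?thesis
    by (simp add: B'_def t_pd_def)
qed

lemma B'_small_values:
  "B' 3 1 = 5" "B' 3 2 = 5" "B' 2 1 = 8" "B' 2 2 = 10" "B' 2 3 = 9"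
proof -
  have "lambda_p 2 1 = 0"
    by (simp add: lambda_p_less)
  then have "lambda_p 2 2 = 2" "lambda_p 2 3 = 2"
    using lambda_p_rec[of 2 2] lambda_p_rec[of 2 3] by simp_all
  then have "lambda_p 2 4 = 8" "lambda_p 2 6 = 10"
    using lambda_p_rec[of 2 4] lambda_p_rec[of 2 6] by simp_all
  then show "B' 2 1 = 8" "B' 2 2 = 10" "B' 2 3 = 9"
    using \<open>lambda_p 2 2 = 2\<close> by (simp_all add: B'_def t_pd_def)
  show "B' 3 1 = 5" "B' 3 2 = 5"
    by (simp_all add: B'_eq_if_t_pd_less t_pd_def)
qed

lemma div_eq_div_of_mult_eq:
  fixes a b d t :: nat
  assumes "0 < a" "0 < d" "a * t = b * d"
  shows "t div d = b div a"
proof -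
  have "t div d = (a * t) div (a * d)"
    using assms(1) by simp
  also have "\<dots> = (b * d) div (a * d)"
    using assms(3) by simp
  also have "\<dots> = b div a"
    using assms(2) by simp
  finally show ?thesis .
qed

lemma double_multiplicity_two_add_two_div_pred:
  fixes p :: nat
  assumes "prime p"
  shows "2 * multiplicity p 2 + 2 div (p - 1) = 4 * multiplicity 2 p + multiplicity p 3"
proof -
  have "p \<noteq> 4"
    using prime_odd_nat[OF assms] by auto
  then have "p = 2 \<or> p = 3 \<or> 5 \<le> p"
    using prime_ge_2_nat[OF assms] by linarith
  then consider "p = 2" | "p = 3" | "5 \<le> p"
    by blast
  then show ?thesis
  proof cases
    case 3
    then have "\<not> p dvd 2" "\<not> p dvd 3" "\<not> 2 dvd p"
      using prime_odd_nat[OF assms] by (auto dest: dvd_imp_le)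
    with 3 show ?thesis
      by (simp add: not_dvd_imp_multiplicity_0)
  qed (simp_all add: multiplicity_self not_dvd_imp_multiplicity_0)
qed

lemma B'_eq_of_pred_mult_eq:
  assumes "2 \<le> p" "0 < d" "(p - 1) * (p ^ j * u) = 2 * d"
  shows "B' p d = 4 + 2 * j + (p ^ j * u + (p - 1) * p ^ j * lambda_p p u) div d"
proof -
  define t where "t = p ^ j * u"
  have t: "t_pd p d = t"
    unfolding t_pd_def t_def assms(3)[symmetric] using assms(1) by simp
  have "p * t = 2 * d + t"
    using assms(1,3) unfolding t_def[symmetric] by (cases p) auto
  moreover have "(p - 1) * lambda_p p t = j * (2 * d) + (p - 1) * p ^ j * lambda_p p u"
    using assms(3) unfolding t_def lambda_p_power_mult[OF assms(1)] by (simp add: algebra_simps)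
  ultimately have "p * t + (p - 1) * lambda_p p t = (2 + 2 * j) * d + (t + (p - 1) * p ^ j * lambda_p p u)"
    by (simp add: algebra_simps)
  then have "(p * t + (p - 1) * lambda_p p t) div d = 2 + 2 * j + (t + (p - 1) * p ^ j * lambda_p p u) div d"
    using assms(2) by (simp only:) (rule div_mult_self3, simp)
  then show ?thesis
    by (simp add: B'_def t t_def)
qed

lemma B'_of_pred_dvd:
  assumes "prime p" "1 \<le> d" "(p - 1) dvd 2 * d"
  shows "4 + 2 * multiplicity p d + 4 * multiplicity 2 p + multiplicity p 3 \<le> B' p d"
    and "real (2 * d) / (real (p ^ multiplicity p (2 * d)) * real (p - 1)) < real p \<Longrightarrow>
      B' p d = 4 + 2 * multiplicity p d + 4 * multiplicity 2 p + multiplicity p 3"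
proof -
  define j where "j = multiplicity p (2 * d)"
  define t where "t = 2 * d div (p - 1)"
  have "2 \<le> p"
    using prime_ge_2_nat[OF assms(1)] .
  have pt: "(p - 1) * t = 2 * d"
    using assms(3) by (simp add: t_def)
  have "t \<noteq> 0"
    using pt assms(2) by (cases t) auto
  then have "multiplicity p ((p - 1) * t) = multiplicity p (p - 1) + multiplicity p t"
    using assms(1) \<open>2 \<le> p\<close> by (intro prime_elem_multiplicity_mult_distrib) auto
  moreover have "\<not> p dvd p - 1"
    using \<open>2 \<le> p\<close> by (auto dest: dvd_imp_le)
  ultimately have "multiplicity p t = j"
    unfolding j_def pt by (simp add: not_dvd_imp_multiplicity_0)
  then obtain u where tu: "t = p ^ j * u"
    using multiplicity_dvd[of p t] by (auto elim: dvdE)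
  have B': "B' p d = 4 + 2 * j + (t + (p - 1) * p ^ j * lambda_p p u) div d"
    using B'_eq_of_pred_mult_eq[of p d j u] pt tu \<open>2 \<le> p\<close> assms(2) by simp
  have "t div d = 2 div (p - 1)"
    using div_eq_div_of_mult_eq[of "p - 1" d t 2] pt \<open>2 \<le> p\<close> assms(2) by simp
  moreover have "j = multiplicity p 2 + multiplicity p d"
    unfolding j_def using assms(1,2) by (simp add: prime_elem_multiplicity_mult_distrib)
  ultimately have bound: "4 + 2 * multiplicity p d + 4 * multiplicity 2 p + multiplicity p 3 = 4 + 2 * j + t div d"
    using double_multiplicity_two_add_two_div_pred[OF assms(1)] by simp
  show "4 + 2 * multiplicity p d + 4 * multiplicity 2 p + multiplicity p 3 \<le> B' p d"
    unfolding bound B' by (simp add: div_le_mono)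
  assume "real (2 * d) / (real (p ^ multiplicity p (2 * d)) * real (p - 1)) < real p"
  moreover have "real (2 * d) = real (p ^ j) * real (p - 1) * real u"
    unfolding pt[symmetric] tu of_nat_mult by simp
  ultimately have "u < p"
    using \<open>2 \<le> p\<close> unfolding j_def by simp
  then show "B' p d = 4 + 2 * multiplicity p d + 4 * multiplicity 2 p + multiplicity p 3"
    unfolding bound B' using lambda_p_less[OF \<open>2 \<le> p\<close>] by simp
qed

theorem lemma3p2:
  fixes p d :: nat
  assumes "prime p" and "d \<ge> 1"
  shows
    "(p \<ge> 5 \<and> p \<ge> d \<longrightarrow>
        (p > 2 * d + 1 \<longrightarrow> B' p d = 2) \<and>
        (p = 2 * d + 1 \<or> p = d \<longrightarrow> B' p d = 4) \<and>
        (d + 1 < p \<and> p < 2 * d + 1 \<longrightarrow> B' p d = 3))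
   \<and> (5 \<le> p \<and> p \<le> d \<longrightarrow> B' p d \<ge> 3)
   \<and> (p = 3 \<longrightarrow> B' 3 1 = 5 \<and> B' 3 2 = 5 \<and> (d \<ge> 3 \<longrightarrow> B' 3 d \<ge> 6))
   \<and> (p = 2 \<longrightarrow> B' 2 1 = 8 \<and> B' 2 2 = 10 \<and> B' 2 3 = 9 \<and> (d \<ge> 4 \<longrightarrow> B' 2 d \<ge> 9))
   \<and> ((p - 1) dvd (2 * d) \<longrightarrow>
        B' p d \<ge> 4 + 2 * multiplicity p d + 4 * multiplicity 2 p + multiplicity p 3 \<and>
        (real (2 * d) / (real (p ^ multiplicity p (2 * d)) * real (p - 1)) < real p \<longrightarrow>
          B' p d = 4 + 2 * multiplicity p d + 4 * multiplicity 2 p + multiplicity p 3))"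
proof -
  have large_prime: "B' p d = 4" if "5 \<le> p" "p = 2 * d + 1 \<or> p = d"
    using that B'_Suc_double_eq_4[of d] B'_diag_eq_4[of p] by auto
  have "odd p" if "5 \<le> p"
    using prime_odd_nat[OF assms(1)] that by simp
  with large_prime show ?thesis
    using B'_eq_2 B'_eq_3 B'_ge_3 B'_3_ge_6 B'_2_ge_9 B'_small_values B'_of_pred_dvd[OF assms]
    by auto
qed

end
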